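(* Let $O$ be a validated totally-ordered object, $S$ a sequence of operations, $i\neq j$ processes, and $op_i, op_j\notin S$ operations issued by $i$ and $j$ respectively, with $\mathrm{valid}(S,op_i,i)=\mathit{True}$, $\mathrm{valid}(S,op_j,j)=\mathit{True}$, $\mathrm{valid}(S\|op_j,op_i,i)=\mathit{False}$ and $\mathrm{valid}(S\|op_i,op_j,j)=\mathit{True}$. Then, in an asynchronous system in which at most one of $i,j$ crashes, the following algorithm solves consensus between $i$ and $j$ (every correct one decides, both decide the same value, and it was proposed by $i$ or $j$). Setup: $O$ is initialized with state $S$; $c_i, c_j$ are reliable atomic SWMR registers written only by $i$ resp. $j$, initially $\bot$. For each process $k\in\{i,j\}$ there are reliable SWMR vectors $oplist_k$ (written only by $k$) and $reslist_k$ (written only by $O$), all entries initially $\bot$. LoggedApply$(op,k)$ at process $k$, with local counter $c_k$ starting at $1$: write $op$ into $oplist_k[c_k]$, wait until $reslist_k[c_k]\neq\bot$, read it as $res$, increment $c_k$, return $res$. The object runs, for each $k$, a task with its own counter $d_k$ starting at $1$: repeatedly wait until $oplist_k[d_k]\neq\bot$, read $op$ from it, compute $res\leftarrow O.\mathrm{apply}(op,k)$, write $res$ into $reslist_k[d_k]$, increment $d_k$. Process $i$, proposing $v_1$: write $v_1$ to $c_i$; $res\leftarrow$ LoggedApply$(op_i,i)$; if $res=(\mathit{NACK},-)$ read $v_2$ from $c_j$ and decide it, else decide $v_1$. Process $j$, proposing $v_2$: write $v_2$ to $c_j$; $res\leftarrow$ LoggedApply$(op_j,j)$; if there is an index $c$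 with $oplist_i[c]=op_i$, then wait until $reslist_i[c]\neq\bot$, read it as $opires$, and if $opires=(\mathit{ACK},r)$ read $v_1$ from $c_i$ and decide $v_1$, while if $opires=(\mathit{NACK},-)$ decide $v_2$; if there is no such index, decide $v_2$.
   Context: Validated object: given a predicate $\mathrm{valid}(\cdot, op, i)$ and function $\mathrm{execute}(\cdot, op, i)$, first argument a strictly partially ordered set of operations (a sequence when totally ordered), $op$ an operation, $i$ its issuer. Clients use $\mathrm{apply}(op,i)$, returning $(\mathit{ACK}, r)$ if $op$ is found valid and executed with result $r$, and $(\mathit{NACK},-)$ otherwise. For a sequence $S$, $S\|op$ denotes $S$ followed by $op$. The history of a run contains only operations for which $\mathrm{apply}$ returns $\mathit{ACK}$; $C(R)$ is the set of complete such operations; $op\rightarrow op'$ means the response of $op$ precedes the invocation of $op'$. Validated totally-ordered object: in every run $R$ there is a total order $\ll$ on $C(R)$ such that (1) $op\rightarrow op'$ implies $op\ll op'$; (2) for every $op\in C(R)$ issued by $i$, with $P(op)=\{op'\in C(R): op'\ll op\}$, $\mathrm{valid}(\langle P(op),\ll\rangle,op,i)=\mathit{True}$ and $op$ returns $\mathrm{execute}(\langle P(op),\ll\rangle,op,i)$. The object $O$ and the shared memory are assumed reliable (never fail). *)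

theory Defs
  imports Main
begin

datatype 'r resp = ACK 'r | NACK

(* program counters of the two processes (shared datatype, meaning depends on process) *)
datatype ppc = P0 | P1 | P2 | P3 | P4 | P5 | PDone

datatype ('op, 'r) tpc = TWait | TApply 'op | TWrite "'r resp"

datatype 'p actor = Proc 'p | Task 'p

(* global state: shared memory, object state, local states.
   Registers/vector entries: None = bottom. Decisions: None = undecided,
   Some x = decided the value x read (x itself possibly bottom). *)
record ('p, 'op, 'v, 'r) sys =
  sys_creg    :: "'p \<Rightarrow> 'v option"
  sys_oplist  :: "'p \<Rightarrow> nat \<Rightarrow> 'op option"
  sys_reslist :: "'p \<Rightarrow> nat \<Rightarrow> 'r resp option"
  sys_ostate  :: "'op list"
  sys_pc      :: "'p \<Rightarrow> ppc"
  sys_ctr     :: "'p \<Rightarrow> nat"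
  sys_lres    :: "'p \<Rightarrow> 'r resp option"
  sys_jidx    :: nat
  sys_dec     :: "'p \<Rightarrow> 'v option option"
  sys_tpc     :: "'p \<Rightarrow> ('op, 'r) tpc"
  sys_dctr    :: "'p \<Rightarrow> nat"

definition init_sys :: "'op list \<Rightarrow> ('p, 'op, 'v, 'r) sys" where
  "init_sys S = \<lparr> sys_creg = (\<lambda>_. None), sys_oplist = (\<lambda>_ _. None),
     sys_reslist = (\<lambda>_ _. None), sys_ostate = S, sys_pc = (\<lambda>_. P0),
     sys_ctr = (\<lambda>_. 1), sys_lres = (\<lambda>_. None), sys_jidx = 0,
     sys_dec = (\<lambda>_. None), sys_tpc = (\<lambda>_. TWait), sys_dctr = (\<lambda>_. 1) \<rparr>"

(* one atomic step of process i (proposing v1, using op_i); waiting = no change *)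
definition next_i :: "'p \<Rightarrow> 'p \<Rightarrow> 'op \<Rightarrow> 'v \<Rightarrow> ('p, 'op, 'v, 'r) sys \<Rightarrow> ('p, 'op, 'v, 'r) sys" where
  "next_i i j opi v1 s = (case sys_pc s i of
     P0 \<Rightarrow> s\<lparr> sys_creg := (sys_creg s)(i := Some v1), sys_pc := (sys_pc s)(i := P1) \<rparr>
   | P1 \<Rightarrow> s\<lparr> sys_oplist := (sys_oplist s)(i := (sys_oplist s i)(sys_ctr s i := Some opi)),
             sys_pc := (sys_pc s)(i := P2) \<rparr>
   | P2 \<Rightarrow> (case sys_reslist s i (sys_ctr s i) of
             None \<Rightarrow> s
           | Some r \<Rightarrow> s\<lparr> sys_lres := (sys_lres s)(i := Some r),
                          sys_ctr := (sys_ctr s)(i := sys_ctr s i + 1),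
                          sys_pc := (sys_pc s)(i := P3) \<rparr>)
   | P3 \<Rightarrow> (if sys_lres s i = Some NACK
           then s\<lparr> sys_dec := (sys_dec s)(i := Some (sys_creg s j)), sys_pc := (sys_pc s)(i := PDone) \<rparr>
           else s\<lparr> sys_dec := (sys_dec s)(i := Some (Some v1)), sys_pc := (sys_pc s)(i := PDone) \<rparr>)
   | _ \<Rightarrow> s)"

(* one atomic step of process j (proposing v2, using op_j); nondeterministic choice of index c *)
definition step_j :: "'p \<Rightarrow> 'p \<Rightarrow> 'op \<Rightarrow> 'op \<Rightarrow> 'v \<Rightarrow> ('p, 'op, 'v, 'r) sys \<Rightarrow> ('p, 'op, 'v, 'r) sys \<Rightarrow> bool" where
  "step_j i j opi opj v2 s s' = (case sys_pc s j of
     P0 \<Rightarrow> s' = s\<lparr> sys_creg := (sys_creg s)(j := Some v2), sys_pc := (sys_pc s)(j := P1) \<rparr>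
   | P1 \<Rightarrow> s' = s\<lparr> sys_oplist := (sys_oplist s)(j := (sys_oplist s j)(sys_ctr s j := Some opj)),
             sys_pc := (sys_pc s)(j := P2) \<rparr>
   | P2 \<Rightarrow> (case sys_reslist s j (sys_ctr s j) of
             None \<Rightarrow> s' = s
           | Some r \<Rightarrow> s' = s\<lparr> sys_lres := (sys_lres s)(j := Some r),
                          sys_ctr := (sys_ctr s)(j := sys_ctr s j + 1),
                          sys_pc := (sys_pc s)(j := P3) \<rparr>)
   | P3 \<Rightarrow> (if (\<exists>c. sys_oplist s i c = Some opi)
           then (\<exists>c. sys_oplist s i c = Some opi \<and>
                   s' = s\<lparr> sys_jidx := c, sys_pc := (sys_pc s)(j := P4) \<rparr>)
           else s' = s\<lparr> sys_dec := (sys_dec s)(j := Some (Some v2)), sys_pc := (sys_pc s)(j := PDone) \<rparr>)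
   | P4 \<Rightarrow> (case sys_reslist s i (sys_jidx s) of
             None \<Rightarrow> s' = s
           | Some (ACK r) \<Rightarrow> s' = s\<lparr> sys_pc := (sys_pc s)(j := P5) \<rparr>
           | Some NACK \<Rightarrow> s' = s\<lparr> sys_dec := (sys_dec s)(j := Some (Some v2)),
                                  sys_pc := (sys_pc s)(j := PDone) \<rparr>)
   | P5 \<Rightarrow> s' = s\<lparr> sys_dec := (sys_dec s)(j := Some (sys_creg s i)), sys_pc := (sys_pc s)(j := PDone) \<rparr>
   | PDone \<Rightarrow> s' = s)"

(* one atomic step of the object's task for process k; O.apply is atomic (linearization point) *)
definition next_task :: "('op list \<Rightarrow> 'op \<Rightarrow> 'p \<Rightarrow> bool) \<Rightarrow> ('op list \<Rightarrow> 'op \<Rightarrow> 'p \<Rightarrow> 'r) \<Rightarrow>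
    'p \<Rightarrow> ('p, 'op, 'v, 'r) sys \<Rightarrow> ('p, 'op, 'v, 'r) sys" where
  "next_task valid execute k s = (case sys_tpc s k of
     TWait \<Rightarrow> (case sys_oplist s k (sys_dctr s k) of
                None \<Rightarrow> s
              | Some op \<Rightarrow> s\<lparr> sys_tpc := (sys_tpc s)(k := TApply op) \<rparr>)
   | TApply op \<Rightarrow> (if valid (sys_ostate s) op k
                   then s\<lparr> sys_ostate := sys_ostate s @ [op],
                           sys_tpc := (sys_tpc s)(k := TWrite (ACK (execute (sys_ostate s) op k))) \<rparr>
                   else s\<lparr> sys_tpc := (sys_tpc s)(k := TWrite NACK) \<rparr>)
   | TWrite r \<Rightarrow> s\<lparr> sys_reslist := (sys_reslist s)(k := (sys_reslist s k)(sys_dctr s k := Some r)),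
                    sys_dctr := (sys_dctr s)(k := sys_dctr s k + 1),
                    sys_tpc := (sys_tpc s)(k := TWait) \<rparr>)"

definition sys_step :: "('op list \<Rightarrow> 'op \<Rightarrow> 'p \<Rightarrow> bool) \<Rightarrow> ('op list \<Rightarrow> 'op \<Rightarrow> 'p \<Rightarrow> 'r) \<Rightarrow>
    'p \<Rightarrow> 'p \<Rightarrow> 'op \<Rightarrow> 'op \<Rightarrow> 'v \<Rightarrow> 'v \<Rightarrow> 'p actor \<Rightarrow>
    ('p, 'op, 'v, 'r) sys \<Rightarrow> ('p, 'op, 'v, 'r) sys \<Rightarrow> bool" where
  "sys_step valid execute i j opi opj v1 v2 a s s' =
     (a = Proc i \<and> s' = next_i i j opi v1 s
    \<or> a = Proc j \<and> step_j i j opi opj v2 s s'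
    \<or> a = Task i \<and> s' = next_task valid execute i s
    \<or> a = Task j \<and> s' = next_task valid execute j s)"

definition is_run :: "('op list \<Rightarrow> 'op \<Rightarrow> 'p \<Rightarrow> bool) \<Rightarrow> ('op list \<Rightarrow> 'op \<Rightarrow> 'p \<Rightarrow> 'r) \<Rightarrow>
    'op list \<Rightarrow> 'p \<Rightarrow> 'p \<Rightarrow> 'op \<Rightarrow> 'op \<Rightarrow> 'v \<Rightarrow> 'v \<Rightarrow>
    (nat \<Rightarrow> ('p, 'op, 'v, 'r) sys) \<Rightarrow> (nat \<Rightarrow> 'p actor) \<Rightarrow> bool" where
  "is_run valid execute S i j opi opj v1 v2 s a =
     (s 0 = init_sys S \<and>
      (\<forall>n. sys_step valid execute i j opi opj v1 v2 (a n) (s n) (s (Suc n))))"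

(* an actor is correct iff it takes infinitely many steps (a crashed one takes finitely many) *)
definition correct :: "(nat \<Rightarrow> 'p actor) \<Rightarrow> 'p actor \<Rightarrow> bool" where
  "correct a x = (\<forall>n. \<exists>m\<ge>n. a m = x)"

(* admissible schedules: the object (its tasks) never fails, at most one of i, j crashes *)
definition fair :: "'p \<Rightarrow> 'p \<Rightarrow> (nat \<Rightarrow> 'p actor) \<Rightarrow> bool" where
  "fair i j a = (correct a (Task i) \<and> correct a (Task j) \<and>
                 (correct a (Proc i) \<or> correct a (Proc j)))"

end

theory Submission
  imports Defs
begin

text \<open>The object linearizes op_i and op_j, and the validity hypotheses leave exactly two outcomes:
  either op_i is applied first and both operations are acknowledged, or op_j is applied first and
  op_i is refused. The response to op_i therefore names a winner: i decides its own value iff op_i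
  was acknowledged, and j decides v_1 iff it sees that acknowledgement in reslist_i. If j does not
  find op_i in oplist_i, then op_j has been applied before op_i could be, so op_i will be refused.
  A refusal of op_i means that op_j was applied, so c_j has been written by the time i reads it.
  Safety is an invariant of the reachable states; liveness holds because the object's tasks never
  crash, so every logged operation is eventually answered, and the processes only wait for answers
  to logged operations.\<close>

lemma correct_progress:
  fixes f :: "nat \<Rightarrow> nat"
  assumes correct: "correct a x" and start: "P N"
    and descent: "\<And>n. P n \<Longrightarrow> \<not> Q (Suc n) \<Longrightarrow>
      P (Suc n) \<and> f (Suc n) \<le> f n \<and> (a n = x \<longrightarrow> f (Suc n) < f n)"
  shows "\<exists>m\<ge>N. Q m"
proof -
  have until: "P m \<and> f m \<le> f n" if "P n" "n \<le> m" "\<forall>k. n < k \<and> k \<le> m \<longrightarrow> \<not> Q k" for n m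
    using that(2,3)
  proof (induction m rule: dec_induct)
    case base
    then show ?case using \<open>P n\<close> by simp
  next
    case (step m)
    then show ?case using descent[of m] by fastforce
  qed
  have "\<exists>m\<ge>n. Q m" if "P n" for n
    using that
  proof (induction "f n" arbitrary: n rule: less_induct)
    case less
    show ?case
    proof (rule ccontr)
      assume none: "\<not> (\<exists>m\<ge>n. Q m)"
      obtain m where m: "m \<ge> n" "a m = x"
        using correct unfolding correct_def by blast
      have "P m" "f m \<le> f n"
        using until[OF less.prems m(1)] none by auto
      moreover have "\<not> Q (Suc m)"
        using none m(1) by auto
      ultimately have "P (Suc m)" "f (Suc m) < f n"
        using descent[of m] m(2) by auto
      then obtain m' where "m' \<ge> Suc m" "Q m'"
        using less.hyps by blast
      then show False
        using none m(1) by auto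
    qed
  qed
  then show ?thesis using start .
qed

section \<open>Transitions\<close>

definition pc_rank :: "ppc \<Rightarrow> nat" where
  "pc_rank p = (case p of P0 \<Rightarrow> 0 | P1 \<Rightarrow> 1 | P2 \<Rightarrow> 2 | P3 \<Rightarrow> 3 | P4 \<Rightarrow> 4 | P5 \<Rightarrow> 5 | PDone \<Rightarrow> 6)"

lemma pc_rank_le: "pc_rank p \<le> 6"
  by (cases p) (simp_all add: pc_rank_def)

lemma next_i_pc_rank_mono: "pc_rank (sys_pc t i) \<le> pc_rank (sys_pc (next_i i j opi v1 t) i)"
  by (auto simp: next_i_def pc_rank_def split: ppc.split option.split)

lemma next_i_pc_rank_less:
  assumes "sys_pc t i \<in> {P0, P1, P3} \<or> sys_pc t i = P2 \<and> sys_reslist t i (sys_ctr t i) \<noteq> None"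
  shows "pc_rank (sys_pc t i) < pc_rank (sys_pc (next_i i j opi v1 t) i)"
  using assms by (auto simp: next_i_def pc_rank_def)

lemma next_i_PDone: "sys_pc t i = PDone \<Longrightarrow> next_i i j opi v1 t = t"
  by (simp add: next_i_def)

lemma next_i_oplist_mono:
  "sys_oplist t i c \<noteq> None \<Longrightarrow> sys_oplist (next_i i j opi v1 t) i c \<noteq> None"
  by (auto simp: next_i_def split: ppc.split option.split)

lemma next_i_frame:
  "sys_tpc (next_i i j opi v1 t) = sys_tpc t \<and> sys_reslist (next_i i j opi v1 t) = sys_reslist t
   \<and> (\<forall>k. k \<noteq> i \<longrightarrow> sys_pc (next_i i j opi v1 t) k = sys_pc t k \<and> sys_dec (next_i i j opi v1 t) k = sys_dec t k
        \<and> sys_oplist (next_i i j opi v1 t) k = sys_oplist t k)"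
  by (simp add: next_i_def split: ppc.split option.split)

lemma step_j_pc_rank_mono:
  "step_j i j opi opj v2 t t' \<Longrightarrow> pc_rank (sys_pc t j) \<le> pc_rank (sys_pc t' j)"
  by (cases "sys_pc t j") (auto simp: step_j_def pc_rank_def split: option.splits resp.splits if_splits)

lemma step_j_pc_rank_less:
  assumes "step_j i j opi opj v2 t t'"
    and "sys_pc t j \<in> {P0, P1, P3, P5}
      \<or> sys_pc t j = P2 \<and> sys_reslist t j (sys_ctr t j) \<noteq> None
      \<or> sys_pc t j = P4 \<and> sys_reslist t i (sys_jidx t) \<noteq> None"
  shows "pc_rank (sys_pc t j) < pc_rank (sys_pc t' j)"
  using assms by (cases "sys_pc t j") (auto simp: step_j_def pc_rank_def split: if_splits option.splits resp.splits)

lemma step_j_PDone: "step_j i j opi opj v2 t t' \<Longrightarrow> sys_pc t j = PDone \<Longrightarrow> t' = t"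
  by (simp add: step_j_def)

lemma step_j_oplist_mono:
  "step_j i j opi opj v2 t t' \<Longrightarrow> sys_oplist t j c \<noteq> None \<Longrightarrow> sys_oplist t' j c \<noteq> None"
  by (cases "sys_pc t j") (auto simp: step_j_def split: option.splits resp.splits if_splits)

lemma step_j_frame:
  "step_j i j opi opj v2 t t' \<Longrightarrow> sys_tpc t' = sys_tpc t \<and> sys_reslist t' = sys_reslist t
   \<and> (\<forall>k. k \<noteq> j \<longrightarrow> sys_pc t' k = sys_pc t k \<and> sys_dec t' k = sys_dec t k
        \<and> sys_oplist t' k = sys_oplist t k)"
  by (cases "sys_pc t j") (auto simp: step_j_def split: option.splits resp.splits if_splits)

lemma next_task_reslist_mono:
  "sys_reslist t k c \<noteq> None \<Longrightarrow> sys_reslist (next_task valid execute k t) k c \<noteq> None"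
  by (simp add: next_task_def split: tpc.split option.split)

lemma next_task_frame:
  "sys_pc (next_task valid execute k t) = sys_pc t \<and> sys_dec (next_task valid execute k t) = sys_dec t
   \<and> sys_oplist (next_task valid execute k t) = sys_oplist t
   \<and> (\<forall>k'. k' \<noteq> k \<longrightarrow> sys_tpc (next_task valid execute k t) k' = sys_tpc t k'
        \<and> sys_reslist (next_task valid execute k t) k' = sys_reslist t k')"
  by (simp add: next_task_def split: tpc.split option.split)

lemma sys_step_cases:
  assumes "sys_step valid execute i j opi opj v1 v2 x t t'"
  obtains "x = Proc i" "t' = next_i i j opi v1 t"
  | "x = Proc j" "step_j i j opi opj v2 t t'"
  | "x = Task i" "t' = next_task valid execute i t"
  | "x = Task j" "t' = next_task valid execute j t"
  using assms unfolding sys_step_def by blast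

lemma sys_step_oplist_mono:
  assumes "i \<noteq> j" and "sys_step valid execute i j opi opj v1 v2 x t t'"
    and "sys_oplist t k c \<noteq> None"
  shows "sys_oplist t' k c \<noteq> None"
  using assms(2)
  by (cases rule: sys_step_cases; insert assms(1,3); cases "k = i"; cases "k = j";
      auto simp: next_i_frame next_i_oplist_mono next_task_frame dest: step_j_frame step_j_oplist_mono)

lemma sys_step_reslist_mono:
  assumes "i \<noteq> j" and "sys_step valid execute i j opi opj v1 v2 x t t'"
    and "sys_reslist t k c \<noteq> None"
  shows "sys_reslist t' k c \<noteq> None"
  using assms(2)
  by (cases rule: sys_step_cases; insert assms(1,3); cases "k = i"; cases "k = j";
      auto simp: next_i_frame next_task_frame next_task_reslist_mono dest: step_j_frame)

lemma sys_step_pc_rank_mono: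
  assumes "i \<noteq> j" and "sys_step valid execute i j opi opj v1 v2 x t t'"
  shows "pc_rank (sys_pc t k) \<le> pc_rank (sys_pc t' k)"
  using assms(2)
  by (cases rule: sys_step_cases; insert assms(1); cases "k = i"; cases "k = j";
      auto simp: next_i_frame next_i_pc_rank_mono next_task_frame dest: step_j_frame step_j_pc_rank_mono)

lemma sys_step_task_frame:
  "sys_step valid execute i j opi opj v1 v2 x t t' \<Longrightarrow> x \<noteq> Task k \<Longrightarrow>
   sys_tpc t' k = sys_tpc t k \<and> sys_reslist t' k = sys_reslist t k"
  by (erule sys_step_cases; auto simp: next_i_frame next_task_frame dest: step_j_frame)

section \<open>Invariant of the reachable states\<close>

text \<open>Each process logs a single operation, always in slot 1. The response the task of k has
  computed for it, whether still pending or already written to reslist_k:\<close>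

definition task_result :: "'p \<Rightarrow> ('p, 'op, 'v, 'r) sys \<Rightarrow> 'r resp option" where
  "task_result k t = (case sys_tpc t k of TWrite r \<Rightarrow> Some r | _ \<Rightarrow> sys_reslist t k 1)"

definition task_inv :: "'p \<Rightarrow> 'op \<Rightarrow> ('p, 'op, 'v, 'r) sys \<Rightarrow> bool" where
  "task_inv k opk t \<longleftrightarrow>
     sys_tpc t k = TWait \<and> sys_dctr t k = 1 \<and> sys_reslist t k = (\<lambda>_. None)
   \<or> sys_tpc t k = TApply opk \<and> sys_dctr t k = 1 \<and> sys_reslist t k = (\<lambda>_. None)
       \<and> sys_oplist t k 1 = Some opk
   \<or> (\<exists>r. sys_tpc t k = TWrite r) \<and> sys_dctr t k = 1 \<and> sys_reslist t k = (\<lambda>_. None)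
       \<and> sys_oplist t k 1 = Some opk
   \<or> sys_tpc t k = TWait \<and> sys_dctr t k = 2 \<and> (\<exists>r. sys_reslist t k = (\<lambda>_. None)(1 := Some r))
       \<and> sys_oplist t k 1 = Some opk"

definition proc_inv :: "'p \<Rightarrow> 'op \<Rightarrow> 'v \<Rightarrow> ('p, 'op, 'v, 'r) sys \<Rightarrow> bool" where
  "proc_inv k opk vk t \<longleftrightarrow>
     sys_oplist t k = (if sys_pc t k \<in> {P0, P1} then (\<lambda>_. None) else (\<lambda>_. None)(1 := Some opk))
   \<and> sys_creg t k = (if sys_pc t k = P0 then None else Some vk)
   \<and> sys_ctr t k = (if sys_pc t k \<in> {P0, P1, P2} then 1 else 2)
   \<and> (sys_dec t k = None \<longleftrightarrow> sys_pc t k \<noteq> PDone)"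

lemma task_result_if_responded: "sys_reslist t k 1 \<noteq> None \<Longrightarrow> task_result k t \<noteq> None"
  by (simp add: task_result_def split: tpc.split)

lemma task_result_update_other_tpc [simp]:
  "k \<noteq> k' \<Longrightarrow> task_result k (t\<lparr>sys_tpc := (sys_tpc t)(k' := x)\<rparr>) = task_result k t"
  by (simp add: task_result_def split: tpc.split)

lemma task_inv_result: "task_inv k opk t \<Longrightarrow> sys_reslist t k 1 = Some r \<Longrightarrow> task_result k t = Some r"
  by (auto simp: task_inv_def task_result_def)

lemma task_inv_unanswered: "task_inv k opk t \<Longrightarrow> sys_reslist t k 1 = None \<Longrightarrow> sys_dctr t k = 1"
  by (auto simp: task_inv_def)

lemma task_inv_oplist: "task_inv k opk t \<Longrightarrow> task_result k t \<noteq> None \<Longrightarrow> sys_oplist t k 1 = Some opk"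
  by (auto simp: task_inv_def task_result_def)

lemma task_result_cong:
  "sys_tpc t' = sys_tpc t \<Longrightarrow> sys_reslist t' = sys_reslist t \<Longrightarrow> task_result k t' = task_result k t"
  by (simp add: task_result_def split: tpc.split)

lemma task_inv_cong:
  "sys_tpc t' = sys_tpc t \<Longrightarrow> sys_reslist t' = sys_reslist t \<Longrightarrow> sys_dctr t' = sys_dctr t
   \<Longrightarrow> sys_oplist t' k 1 = sys_oplist t k 1 \<Longrightarrow> task_inv k opk t' = task_inv k opk t"
  by (simp add: task_inv_def)

lemma proc_inv_oplist_1: "proc_inv k opk vk t \<Longrightarrow> (sys_oplist t k 1 = None) = (sys_pc t k \<in> {P0,P1})"
  by (simp add: proc_inv_def)

lemma proc_inv_oplist_2: "proc_inv k opk vk t \<Longrightarrow> sys_oplist t k 2 = None"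
  by (simp add: proc_inv_def)

lemma proc_inv_creg: "proc_inv k opk vk t \<Longrightarrow> sys_creg t k = (if sys_pc t k = P0 then None else Some vk)"
  by (simp add: proc_inv_def)

lemma proc_inv_ctr: "proc_inv k opk vk t \<Longrightarrow> sys_ctr t k = (if sys_pc t k \<in> {P0,P1,P2} then 1 else 2)"
  by (simp add: proc_inv_def)

lemma proc_inv_dec: "proc_inv k opk vk t \<Longrightarrow> (sys_dec t k = None) = (sys_pc t k \<noteq> PDone)"
  by (simp add: proc_inv_def)

locale validated_consensus =
  fixes valid :: "'op list \<Rightarrow> 'op \<Rightarrow> 'p \<Rightarrow> bool"
    and execute :: "'op list \<Rightarrow> 'op \<Rightarrow> 'p \<Rightarrow> 'r"
    and S :: "'op list" and i j :: 'p and opi opj :: 'op and v1 v2 :: 'v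
  assumes ij: "i \<noteq> j"
    and valid_opi: "valid S opi i" and valid_opj: "valid S opj j"
    and opi_invalid_after_opj: "\<not> valid (S @ [opj]) opi i"
    and opj_valid_after_opi: "valid (S @ [opi]) opj j"
begin

text \<open>The last four conjuncts carry the linearization argument: the object state is determined by
  which of the two tasks has computed a response, and op_i is refused exactly when op_j came first.\<close>

definition consensus_inv :: "('p, 'op, 'v, 'r) sys \<Rightarrow> bool" where
  "consensus_inv t \<longleftrightarrow>
     task_inv i opi t \<and> task_inv j opj t \<and> proc_inv i opi v1 t \<and> proc_inv j opj v2 t
   \<and> sys_pc t i \<in> {P0, P1, P2, P3, PDone}
   \<and> (sys_pc t i \<in> {P3, PDone} \<longrightarrow> sys_lres t i = sys_reslist t i 1 \<and> sys_reslist t i 1 \<noteq> None)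
   \<and> (\<forall>x. sys_dec t i = Some x \<longrightarrow>
        x = Some v1 \<and> (\<exists>r. task_result i t = Some (ACK r)) \<or> x = Some v2 \<and> task_result i t = Some NACK)
   \<and> (sys_pc t j \<in> {P3, P4, P5, PDone} \<longrightarrow> sys_reslist t j 1 \<noteq> None)
   \<and> (sys_pc t j \<in> {P4, P5} \<longrightarrow> sys_jidx t = 1 \<and> sys_oplist t i 1 = Some opi)
   \<and> (sys_pc t j = P5 \<longrightarrow> (\<exists>r. sys_reslist t i 1 = Some (ACK r)))
   \<and> (\<forall>y. sys_dec t j = Some y \<longrightarrow>
        y = Some v1 \<and> (\<exists>r. task_result i t = Some (ACK r))
      \<or> y = Some v2 \<and> (task_result i t = Some NACK \<or> task_result i t = None))
   \<and> (task_result i t = None \<and> task_result j t = None \<longrightarrow> sys_ostate t = S)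
   \<and> (task_result i t \<noteq> None \<and> task_result j t = None \<longrightarrow>
        sys_ostate t = S @ [opi] \<and> (\<exists>r. task_result i t = Some (ACK r)))
   \<and> (task_result i t = None \<and> task_result j t \<noteq> None \<longrightarrow> sys_ostate t = S @ [opj])
   \<and> (task_result i t \<noteq> None \<and> task_result j t \<noteq> None \<longrightarrow>
        sys_ostate t = S @ [opi, opj] \<and> (\<exists>r. task_result i t = Some (ACK r))
      \<or> sys_ostate t = S @ [opj] \<and> task_result i t = Some NACK)"

lemma inv_init: "consensus_inv (init_sys S)"
  using ij by (auto simp: consensus_inv_def init_sys_def task_inv_def proc_inv_def task_result_def)

lemma
  assumes "consensus_inv t"
  shows inv_task_i: "task_inv i opi t" and inv_task_j: "task_inv j opj t"
    and inv_proc_i: "proc_inv i opi v1 t" and inv_proc_j: "proc_inv j opj v2 t"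
    and inv_pc_i: "sys_pc t i \<in> {P0, P1, P2, P3, PDone}"
    and inv_lres_i: "sys_pc t i \<in> {P3, PDone} \<Longrightarrow>
      sys_lres t i = sys_reslist t i 1 \<and> sys_reslist t i 1 \<noteq> None"
    and inv_dec_i: "sys_dec t i = Some x \<Longrightarrow>
      x = Some v1 \<and> (\<exists>r. task_result i t = Some (ACK r)) \<or> x = Some v2 \<and> task_result i t = Some NACK"
    and inv_reslist_j: "sys_pc t j \<in> {P3, P4, P5, PDone} \<Longrightarrow> sys_reslist t j 1 \<noteq> None"
    and inv_jidx: "sys_pc t j \<in> {P4, P5} \<Longrightarrow> sys_jidx t = 1 \<and> sys_oplist t i 1 = Some opi"
    and inv_P5_ack: "sys_pc t j = P5 \<Longrightarrow> \<exists>r. sys_reslist t i 1 = Some (ACK r)"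
    and inv_dec_j: "sys_dec t j = Some y \<Longrightarrow>
      y = Some v1 \<and> (\<exists>r. task_result i t = Some (ACK r))
      \<or> y = Some v2 \<and> (task_result i t = Some NACK \<or> task_result i t = None)"
    and inv_ostate_S: "task_result i t = None \<Longrightarrow> task_result j t = None \<Longrightarrow> sys_ostate t = S"
    and inv_ostate_opi: "task_result i t \<noteq> None \<Longrightarrow> task_result j t = None \<Longrightarrow>
      sys_ostate t = S @ [opi] \<and> (\<exists>r. task_result i t = Some (ACK r))"
    and inv_ostate_opj: "task_result i t = None \<Longrightarrow> task_result j t \<noteq> None \<Longrightarrow>
      sys_ostate t = S @ [opj]"
  using assms unfolding consensus_inv_def by simp_all

lemma inv_next_task_i_wait:
  assumes I: "consensus_inv t" and w: "sys_tpc t i = TWait"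
  shows "consensus_inv (next_task valid execute i t)"
proof (cases "sys_oplist t i (sys_dctr t i)")
  case None
  then show ?thesis using I w by (simp add: next_task_def)
next
  case (Some op)
  have d1: "sys_dctr t i = 1" and r: "sys_reslist t i = (\<lambda>_. None)"
    using inv_task_i[OF I] proc_inv_oplist_2[OF inv_proc_i[OF I]] w Some by (auto simp: task_inv_def)
  have op: "op = opi" using inv_proc_i[OF I] Some d1 by (auto simp: proc_inv_def split: if_splits)
  have tr: "task_result i t = None" using w r by (simp add: task_result_def)
  let ?t = "t\<lparr>sys_tpc := (sys_tpc t)(i := TApply op)\<rparr>"
  have e: "next_task valid execute i t = ?t" using w Some by (simp add: next_task_def)
  have tr': "task_result i ?t = None" using r by (simp add: task_result_def)
  have "task_inv i opi ?t" using d1 op r Some by (simp add: task_inv_def)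
  moreover have "task_inv j opj ?t" using inv_task_j[OF I] ij by (simp add: task_inv_def)
  moreover have "proc_inv i opi v1 ?t" "proc_inv j opj v2 ?t"
    using inv_proc_i[OF I] inv_proc_j[OF I] by (simp_all add: proc_inv_def)
  ultimately show ?thesis using I ij tr tr' r unfolding e consensus_inv_def by clarsimp
qed

lemma inv_next_task_i_apply:
  assumes I: "consensus_inv t" and w: "sys_tpc t i = TApply op"
  shows "consensus_inv (next_task valid execute i t)"
proof -
  have d1: "sys_dctr t i = 1" and op: "op = opi" and r: "sys_reslist t i = (\<lambda>_. None)"
    and o1: "sys_oplist t i 1 = Some opi"
    using inv_task_i[OF I] w by (auto simp: task_inv_def)
  have tr: "task_result i t = None" using w r by (simp add: task_result_def)
  have pci: "sys_pc t i = P2"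
    using inv_pc_i[OF I] inv_lres_i[OF I] proc_inv_oplist_1[OF inv_proc_i[OF I]] o1 r by auto
  have dj: "sys_dec t j \<noteq> None \<Longrightarrow> task_result j t \<noteq> None"
    using inv_reslist_j[OF I] proc_inv_dec[OF inv_proc_j[OF I]] by (intro task_result_if_responded) auto
  show ?thesis
  proof (cases "task_result j t = None")
    case True
    then have os: "sys_ostate t = S" using inv_ostate_S[OF I] tr by simp
    let ?t = "t\<lparr>sys_ostate := sys_ostate t @ [op],
                sys_tpc := (sys_tpc t)(i := TWrite (ACK (execute (sys_ostate t) op i)))\<rparr>"
    have e: "next_task valid execute i t = ?t" using w os op valid_opi by (simp add: next_task_def)
    have tr': "task_result i ?t = Some (ACK (execute S opi i))"
      using os op by (simp add: task_result_def)
    have trj: "task_result j ?t = task_result j t"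
      using ij by (simp add: task_result_def split: tpc.split)
    have "task_inv i opi ?t" using d1 op r o1 by (simp add: task_inv_def)
    moreover have "task_inv j opj ?t" using inv_task_j[OF I] ij by (simp add: task_inv_def)
    moreover have "proc_inv i opi v1 ?t" "proc_inv j opj v2 ?t"
      using inv_proc_i[OF I] inv_proc_j[OF I] by (simp_all add: proc_inv_def)
    ultimately show ?thesis
      using I ij tr tr' trj r True dj os op pci unfolding e consensus_inv_def by clarsimp
  next
    case False
    then have os: "sys_ostate t = S @ [opj]" using inv_ostate_opj[OF I] tr by simp
    let ?t = "t\<lparr>sys_tpc := (sys_tpc t)(i := TWrite NACK)\<rparr>"
    have e: "next_task valid execute i t = ?t"
      using w os op opi_invalid_after_opj by (simp add: next_task_def)
    have tr': "task_result i ?t = Some NACK" by (simp add: task_result_def)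
    have trj: "task_result j ?t = task_result j t"
      using ij by (simp add: task_result_def split: tpc.split)
    have "task_inv i opi ?t" using d1 op r o1 by (simp add: task_inv_def)
    moreover have "task_inv j opj ?t" using inv_task_j[OF I] ij by (simp add: task_inv_def)
    moreover have "proc_inv i opi v1 ?t" "proc_inv j opj v2 ?t"
      using inv_proc_i[OF I] inv_proc_j[OF I] by (simp_all add: proc_inv_def)
    ultimately show ?thesis
      using I ij tr tr' trj r False dj os op pci unfolding e consensus_inv_def by clarsimp
  qed
qed

lemma inv_next_task_i_write:
  assumes I: "consensus_inv t" and w: "sys_tpc t i = TWrite rr"
  shows "consensus_inv (next_task valid execute i t)"
proof -
  have d1: "sys_dctr t i = 1" and r: "sys_reslist t i = (\<lambda>_. None)"
    and o1: "sys_oplist t i 1 = Some opi"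
    using inv_task_i[OF I] w by (auto simp: task_inv_def)
  have tr: "task_result i t = Some rr" using w by (simp add: task_result_def)
  have pci: "sys_pc t i = P2"
    using inv_pc_i[OF I] inv_lres_i[OF I] proc_inv_oplist_1[OF inv_proc_i[OF I]] o1 r by auto
  let ?t = "t\<lparr>sys_reslist := (sys_reslist t)(i := (\<lambda>_. None)(1 := Some rr)),
                    sys_dctr := (sys_dctr t)(i := 2),
                    sys_tpc := (sys_tpc t)(i := TWait)\<rparr>"
  have e: "next_task valid execute i t = ?t"
    using w d1 r by (simp add: next_task_def numeral_2_eq_2)
  have tr': "task_result i ?t = Some rr" by (simp add: task_result_def)
  have trj: "task_result j ?t = task_result j t"
    using ij by (simp add: task_result_def split: tpc.split)
  have "task_inv i opi ?t" using o1 by (auto simp: task_inv_def)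
  moreover have "task_inv j opj ?t" using inv_task_j[OF I] ij by (simp add: task_inv_def)
  moreover have "proc_inv i opi v1 ?t" "proc_inv j opj v2 ?t"
    using inv_proc_i[OF I] inv_proc_j[OF I] by (simp_all add: proc_inv_def)
  ultimately show ?thesis using I ij tr tr' trj r pci unfolding e consensus_inv_def by clarsimp
qed

lemma inv_next_task_j_wait:
  assumes I: "consensus_inv t" and w: "sys_tpc t j = TWait"
  shows "consensus_inv (next_task valid execute j t)"
proof (cases "sys_oplist t j (sys_dctr t j)")
  case None
  then show ?thesis using I w by (simp add: next_task_def)
next
  case (Some op)
  have d1: "sys_dctr t j = 1" and r: "sys_reslist t j = (\<lambda>_. None)"
    using inv_task_j[OF I] proc_inv_oplist_2[OF inv_proc_j[OF I]] w Some by (auto simp: task_inv_def)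
  have op: "op = opj" using inv_proc_j[OF I] Some d1 by (auto simp: proc_inv_def split: if_splits)
  have tr: "task_result j t = None" using w r by (simp add: task_result_def)
  let ?t = "t\<lparr>sys_tpc := (sys_tpc t)(j := TApply op)\<rparr>"
  have e: "next_task valid execute j t = ?t" using w Some by (simp add: next_task_def)
  have tr': "task_result j ?t = None" using r by (simp add: task_result_def)
  have "task_inv j opj ?t" using d1 op r Some by (simp add: task_inv_def)
  moreover have "task_inv i opi ?t" using inv_task_i[OF I] ij by (simp add: task_inv_def)
  moreover have "proc_inv i opi v1 ?t" "proc_inv j opj v2 ?t"
    using inv_proc_i[OF I] inv_proc_j[OF I] by (simp_all add: proc_inv_def)
  ultimately show ?thesis using I ij tr tr' r unfolding e consensus_inv_def by clarsimp
qed

lemma inv_next_task_j_apply: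
  assumes I: "consensus_inv t" and w: "sys_tpc t j = TApply op"
  shows "consensus_inv (next_task valid execute j t)"
proof -
  have d1: "sys_dctr t j = 1" and op: "op = opj" and r: "sys_reslist t j = (\<lambda>_. None)"
    and o1: "sys_oplist t j 1 = Some opj"
    using inv_task_j[OF I] w by (auto simp: task_inv_def)
  have tr: "task_result j t = None" using w r by (simp add: task_result_def)
  have pcj: "sys_pc t j \<notin> {P3,P4,P5,PDone}" using inv_reslist_j[OF I] r by auto
  show ?thesis
  proof (cases "task_result i t = None")
    case True
    then have os: "sys_ostate t = S" using inv_ostate_S[OF I] tr by simp
    let ?t = "t\<lparr>sys_ostate := sys_ostate t @ [op],
                sys_tpc := (sys_tpc t)(j := TWrite (ACK (execute (sys_ostate t) op j)))\<rparr>"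
    have e: "next_task valid execute j t = ?t" using w os op valid_opj by (simp add: next_task_def)
    have tr': "task_result j ?t = Some (ACK (execute S opj j))"
      using os op by (simp add: task_result_def)
    have tri: "task_result i ?t = task_result i t"
      using ij by (simp add: task_result_def split: tpc.split)
    have "task_inv j opj ?t" using d1 op r o1 by (simp add: task_inv_def)
    moreover have "task_inv i opi ?t" using inv_task_i[OF I] ij by (simp add: task_inv_def)
    moreover have "proc_inv i opi v1 ?t" "proc_inv j opj v2 ?t"
      using inv_proc_i[OF I] inv_proc_j[OF I] by (simp_all add: proc_inv_def)
    ultimately show ?thesis
      using I ij tr tr' tri r True os op pcj unfolding e consensus_inv_def by clarsimp
  next
    case False
    then have os: "sys_ostate t = S @ [opi]" and ack: "\<exists>r. task_result i t = Some (ACK r)"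
      using inv_ostate_opi[OF I] tr by simp_all
    let ?t = "t\<lparr>sys_ostate := sys_ostate t @ [op],
                sys_tpc := (sys_tpc t)(j := TWrite (ACK (execute (sys_ostate t) op j)))\<rparr>"
    have e: "next_task valid execute j t = ?t"
      using w os op opj_valid_after_opi by (simp add: next_task_def)
    have tr': "task_result j ?t = Some (ACK (execute (S @ [opi]) opj j))"
      using os op by (simp add: task_result_def)
    have tri: "task_result i ?t = task_result i t"
      using ij by (simp add: task_result_def split: tpc.split)
    have "task_inv j opj ?t" using d1 op r o1 by (simp add: task_inv_def)
    moreover have "task_inv i opi ?t" using inv_task_i[OF I] ij by (simp add: task_inv_def)
    moreover have "proc_inv i opi v1 ?t" "proc_inv j opj v2 ?t"
      using inv_proc_i[OF I] inv_proc_j[OF I] by (simp_all add: proc_inv_def)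
    ultimately show ?thesis
      using I ij tr tr' tri r False os op pcj ack unfolding e consensus_inv_def by clarsimp
  qed
qed

lemma inv_next_task_j_write:
  assumes I: "consensus_inv t" and w: "sys_tpc t j = TWrite rr"
  shows "consensus_inv (next_task valid execute j t)"
proof -
  have d1: "sys_dctr t j = 1" and r: "sys_reslist t j = (\<lambda>_. None)"
    and o1: "sys_oplist t j 1 = Some opj"
    using inv_task_j[OF I] w by (auto simp: task_inv_def)
  have tr: "task_result j t = Some rr" using w by (simp add: task_result_def)
  have pcj: "sys_pc t j \<notin> {P3,P4,P5,PDone}" using inv_reslist_j[OF I] r by auto
  let ?t = "t\<lparr>sys_reslist := (sys_reslist t)(j := (\<lambda>_. None)(1 := Some rr)),
                    sys_dctr := (sys_dctr t)(j := 2),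
                    sys_tpc := (sys_tpc t)(j := TWait)\<rparr>"
  have e: "next_task valid execute j t = ?t"
    using w d1 r by (simp add: next_task_def numeral_2_eq_2)
  have tr': "task_result j ?t = Some rr" by (simp add: task_result_def)
  have tri: "task_result i ?t = task_result i t"
    using ij by (simp add: task_result_def split: tpc.split)
  have "task_inv j opj ?t" using o1 by (auto simp: task_inv_def)
  moreover have "task_inv i opi ?t" using inv_task_i[OF I] ij by (simp add: task_inv_def)
  moreover have "proc_inv i opi v1 ?t" "proc_inv j opj v2 ?t"
    using inv_proc_i[OF I] inv_proc_j[OF I] by (simp_all add: proc_inv_def)
  ultimately show ?thesis using I ij tr tr' tri r pcj unfolding e consensus_inv_def by clarsimp
qed

lemma inv_next_task:
  assumes "consensus_inv t" "k \<in> {i, j}" shows "consensus_inv (next_task valid execute k t)"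
  using assms inv_next_task_i_wait inv_next_task_i_apply inv_next_task_i_write
    inv_next_task_j_wait inv_next_task_j_apply inv_next_task_j_write
  by (cases "sys_tpc t k") auto

lemma inv_next_i_logged_apply:
  assumes I: "consensus_inv t" and pc_range: "sys_pc t i \<in> {P0, P1, P2}"
  shows "consensus_inv (next_i i j opi v1 t)"
  using pc_range
proof (elim insertE emptyE)
  assume pc: "sys_pc t i = P0"
  let ?t = "t\<lparr> sys_creg := (sys_creg t)(i := Some v1), sys_pc := (sys_pc t)(i := P1) \<rparr>"
  have e: "next_i i j opi v1 t = ?t" using pc by (simp add: next_i_def)
  have tr: "task_result k ?t = task_result k t" for k by (rule task_result_cong) simp_all
  have "task_inv i opi ?t = task_inv i opi t" "task_inv j opj ?t = task_inv j opj t"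
    by (rule task_inv_cong; simp)+
  moreover have "proc_inv i opi v1 ?t" using inv_proc_i[OF I] pc by (simp add: proc_inv_def)
  moreover have "proc_inv j opj v2 ?t" using inv_proc_j[OF I] ij by (simp add: proc_inv_def)
  ultimately show ?thesis using I ij tr pc unfolding e consensus_inv_def by clarsimp
next
  assume pc: "sys_pc t i = P1"
  have o: "sys_oplist t i = (\<lambda>_. None)" and c: "sys_ctr t i = 1"
    using inv_proc_i[OF I] pc by (simp_all add: proc_inv_def)
  have tri: "task_result i t = None" using task_inv_oplist[OF inv_task_i[OF I]] o by fastforce
  let ?t = "t\<lparr> sys_oplist := (sys_oplist t)(i := (\<lambda>_. None)(1 := Some opi)), sys_pc := (sys_pc t)(i := P2) \<rparr>"
  have e: "next_i i j opi v1 t = ?t" using pc o c by (simp add: next_i_def)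
  have tr: "task_result k ?t = task_result k t" for k by (rule task_result_cong) simp_all
  have "task_inv i opi ?t" using inv_task_i[OF I] tri by (auto simp: task_inv_def task_result_def)
  moreover have "task_inv j opj ?t = task_inv j opj t" using ij by (intro task_inv_cong) simp_all
  moreover have "proc_inv i opi v1 ?t" using inv_proc_i[OF I] pc by (simp add: proc_inv_def)
  moreover have "proc_inv j opj v2 ?t" using inv_proc_j[OF I] ij by (simp add: proc_inv_def)
  ultimately show ?thesis using I ij tr pc tri o unfolding e consensus_inv_def by clarsimp
next
  assume pc: "sys_pc t i = P2"
  have c: "sys_ctr t i = 1" using inv_proc_i[OF I] pc by (simp add: proc_inv_def)
  show ?thesis
  proof (cases "sys_reslist t i 1")
    case None
    then show ?thesis using I pc c by (simp add: next_i_def)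
  next
    case (Some r)
    let ?t = "t\<lparr> sys_lres := (sys_lres t)(i := Some r), sys_ctr := (sys_ctr t)(i := 2),
                  sys_pc := (sys_pc t)(i := P3) \<rparr>"
    have e: "next_i i j opi v1 t = ?t" using pc c Some by (simp add: next_i_def numeral_2_eq_2)
    have tr: "task_result k ?t = task_result k t" for k by (rule task_result_cong) simp_all
    have "task_inv i opi ?t = task_inv i opi t" "task_inv j opj ?t = task_inv j opj t"
      by (rule task_inv_cong; simp)+
    moreover have "proc_inv i opi v1 ?t" using inv_proc_i[OF I] pc by (simp add: proc_inv_def)
    moreover have "proc_inv j opj v2 ?t" using inv_proc_j[OF I] ij by (simp add: proc_inv_def)
    moreover have "sys_dec t i = None" using proc_inv_dec[OF inv_proc_i[OF I]] pc by simp
    ultimately show ?thesis using I ij tr pc Some unfolding e consensus_inv_def by clarsimp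
  qed
qed

lemma inv_next_i_decide:
  assumes I: "consensus_inv t" and pc: "sys_pc t i = P3"
  shows "consensus_inv (next_i i j opi v1 t)"
proof -
  have l: "sys_lres t i = sys_reslist t i 1" "sys_reslist t i 1 \<noteq> None"
    using inv_lres_i[OF I] pc by auto
  show ?thesis
  proof (cases "sys_lres t i = Some NACK")
    case True
    have tri: "task_result i t = Some NACK"
      using task_inv_result[OF inv_task_i[OF I]] l True by metis
    then have "task_result j t \<noteq> None" using inv_ostate_opi[OF I] by auto
    then have "sys_oplist t j 1 = Some opj" using task_inv_oplist[OF inv_task_j[OF I]] by simp
    then have cj: "sys_creg t j = Some v2"
      using proc_inv_oplist_1[OF inv_proc_j[OF I]] proc_inv_creg[OF inv_proc_j[OF I]] by auto
    let ?t = "t\<lparr> sys_dec := (sys_dec t)(i := Some (Some v2)), sys_pc := (sys_pc t)(i := PDone) \<rparr>"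
    have e: "next_i i j opi v1 t = ?t" using pc True cj by (simp add: next_i_def)
    have tr: "task_result k ?t = task_result k t" for k by (rule task_result_cong) simp_all
    have "task_inv i opi ?t = task_inv i opi t" "task_inv j opj ?t = task_inv j opj t"
      by (rule task_inv_cong; simp)+
    moreover have "proc_inv i opi v1 ?t" using inv_proc_i[OF I] pc by (simp add: proc_inv_def)
    moreover have "proc_inv j opj v2 ?t" using inv_proc_j[OF I] ij by (simp add: proc_inv_def)
    ultimately show ?thesis using I ij tr pc tri l unfolding e consensus_inv_def by clarsimp
  next
    case False
    obtain r where r: "sys_reslist t i 1 = Some r" using l by auto
    have "r \<noteq> NACK" using False l r by simp
    then obtain x where x: "r = ACK x" by (cases r) auto
    have tri: "task_result i t = Some (ACK x)"
      using task_inv_result[OF inv_task_i[OF I]] r x by simp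
    let ?t = "t\<lparr> sys_dec := (sys_dec t)(i := Some (Some v1)), sys_pc := (sys_pc t)(i := PDone) \<rparr>"
    have e: "next_i i j opi v1 t = ?t" using pc False by (simp add: next_i_def)
    have tr: "task_result k ?t = task_result k t" for k by (rule task_result_cong) simp_all
    have "task_inv i opi ?t = task_inv i opi t" "task_inv j opj ?t = task_inv j opj t"
      by (rule task_inv_cong; simp)+
    moreover have "proc_inv i opi v1 ?t" using inv_proc_i[OF I] pc by (simp add: proc_inv_def)
    moreover have "proc_inv j opj v2 ?t" using inv_proc_j[OF I] ij by (simp add: proc_inv_def)
    ultimately show ?thesis using I ij tr pc tri l unfolding e consensus_inv_def by clarsimp
  qed
qed

lemma inv_next_i:
  assumes I: "consensus_inv t"
  shows "consensus_inv (next_i i j opi v1 t)"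
  using inv_pc_i[OF I] inv_next_i_logged_apply[OF I] inv_next_i_decide[OF I]
    next_i_PDone[of t i j opi v1] I
  by auto

lemma inv_step_j_logged_apply:
  assumes I: "consensus_inv t" and st: "step_j i j opi opj v2 t t'" and pc_range: "sys_pc t j \<in> {P0, P1, P2}"
  shows "consensus_inv t'"
  using pc_range
proof (elim insertE emptyE)
  assume pc: "sys_pc t j = P0"
  let ?t = "t\<lparr> sys_creg := (sys_creg t)(j := Some v2), sys_pc := (sys_pc t)(j := P1) \<rparr>"
  have e: "t' = ?t" using pc st by (simp add: step_j_def)
  have tr: "task_result k ?t = task_result k t" for k by (rule task_result_cong) simp_all
  have "task_inv i opi ?t = task_inv i opi t" "task_inv j opj ?t = task_inv j opj t"
    by (rule task_inv_cong; simp)+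
  moreover have "proc_inv j opj v2 ?t" using inv_proc_j[OF I] pc by (simp add: proc_inv_def)
  moreover have "proc_inv i opi v1 ?t" using inv_proc_i[OF I] ij by (simp add: proc_inv_def)
  ultimately show ?thesis using I ij tr pc unfolding e consensus_inv_def by clarsimp
next
  assume pc: "sys_pc t j = P1"
  have o: "sys_oplist t j = (\<lambda>_. None)" and c: "sys_ctr t j = 1"
    using inv_proc_j[OF I] pc by (simp_all add: proc_inv_def)
  have trj: "task_result j t = None" using task_inv_oplist[OF inv_task_j[OF I]] o by fastforce
  let ?t = "t\<lparr> sys_oplist := (sys_oplist t)(j := (\<lambda>_. None)(1 := Some opj)), sys_pc := (sys_pc t)(j := P2) \<rparr>"
  have e: "t' = ?t" using pc o c st by (simp add: step_j_def)
  have tr: "task_result k ?t = task_result k t" for k by (rule task_result_cong) simp_all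
  have "task_inv j opj ?t" using inv_task_j[OF I] trj by (auto simp: task_inv_def task_result_def)
  moreover have "task_inv i opi ?t = task_inv i opi t" using ij by (intro task_inv_cong) simp_all
  moreover have "proc_inv j opj v2 ?t" using inv_proc_j[OF I] pc by (simp add: proc_inv_def)
  moreover have "proc_inv i opi v1 ?t" using inv_proc_i[OF I] ij by (simp add: proc_inv_def)
  ultimately show ?thesis using I ij tr pc trj o unfolding e consensus_inv_def by clarsimp
next
  assume pc: "sys_pc t j = P2"
  have c: "sys_ctr t j = 1" using inv_proc_j[OF I] pc by (simp add: proc_inv_def)
  show ?thesis
  proof (cases "sys_reslist t j 1")
    case None
    then show ?thesis using I pc c st by (simp add: step_j_def)
  next
    case (Some r)
    let ?t = "t\<lparr> sys_lres := (sys_lres t)(j := Some r), sys_ctr := (sys_ctr t)(j := 2),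
                  sys_pc := (sys_pc t)(j := P3) \<rparr>"
    have e: "t' = ?t" using pc c Some st by (simp add: step_j_def numeral_2_eq_2)
    have tr: "task_result k ?t = task_result k t" for k by (rule task_result_cong) simp_all
    have "task_inv i opi ?t = task_inv i opi t" "task_inv j opj ?t = task_inv j opj t"
      by (rule task_inv_cong; simp)+
    moreover have "proc_inv j opj v2 ?t" using inv_proc_j[OF I] pc by (simp add: proc_inv_def)
    moreover have "proc_inv i opi v1 ?t" using inv_proc_i[OF I] ij by (simp add: proc_inv_def)
    moreover have "sys_dec t j = None" using proc_inv_dec[OF inv_proc_j[OF I]] pc by simp
    ultimately show ?thesis using I ij tr pc Some unfolding e consensus_inv_def by clarsimp
  qed
qed

lemma inv_step_j_lookup:
  assumes I: "consensus_inv t" and st: "step_j i j opi opj v2 t t'" and pc: "sys_pc t j = P3"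
  shows "consensus_inv t'"
proof -
  have rj: "sys_reslist t j 1 \<noteq> None" using inv_reslist_j[OF I] pc by simp
  show ?thesis
  proof (cases "\<exists>c. sys_oplist t i c = Some opi")
    case True
    then have o1: "sys_oplist t i 1 = Some opi" and cc: "\<And>c. sys_oplist t i c = Some opi \<Longrightarrow> c = 1"
      using inv_proc_i[OF I] by (auto simp: proc_inv_def split: if_splits)
    let ?t = "t\<lparr> sys_jidx := 1, sys_pc := (sys_pc t)(j := P4) \<rparr>"
    have e: "t' = ?t" using pc True cc st by (auto simp: step_j_def)
    have tr: "task_result k ?t = task_result k t" for k by (rule task_result_cong) simp_all
    have "task_inv i opi ?t = task_inv i opi t" "task_inv j opj ?t = task_inv j opj t"
      by (rule task_inv_cong; simp)+
    moreover have "proc_inv j opj v2 ?t" using inv_proc_j[OF I] pc by (simp add: proc_inv_def)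
    moreover have "proc_inv i opi v1 ?t" using inv_proc_i[OF I] ij by (simp add: proc_inv_def)
    moreover have "sys_dec t j = None" using proc_inv_dec[OF inv_proc_j[OF I]] pc by simp
    ultimately show ?thesis using I ij tr pc o1 rj unfolding e consensus_inv_def by clarsimp
  next
    case False
    then have tri: "task_result i t = None" using task_inv_oplist[OF inv_task_i[OF I]] by fastforce
    let ?t = "t\<lparr> sys_dec := (sys_dec t)(j := Some (Some v2)), sys_pc := (sys_pc t)(j := PDone) \<rparr>"
    have e: "t' = ?t" using pc False st by (simp add: step_j_def)
    have tr: "task_result k ?t = task_result k t" for k by (rule task_result_cong) simp_all
    have "task_inv i opi ?t = task_inv i opi t" "task_inv j opj ?t = task_inv j opj t"
      by (rule task_inv_cong; simp)+
    moreover have "proc_inv j opj v2 ?t" using inv_proc_j[OF I] pc by (simp add: proc_inv_def)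
    moreover have "proc_inv i opi v1 ?t" using inv_proc_i[OF I] ij by (simp add: proc_inv_def)
    ultimately show ?thesis using I ij tr pc tri rj unfolding e consensus_inv_def by clarsimp
  qed
qed

lemma inv_step_j_await:
  assumes I: "consensus_inv t" and st: "step_j i j opi opj v2 t t'" and pc: "sys_pc t j = P4"
  shows "consensus_inv t'"
proof -
  have x: "sys_jidx t = 1" "sys_oplist t i 1 = Some opi" using inv_jidx[OF I] pc by auto
  have rj: "sys_reslist t j 1 \<noteq> None" using inv_reslist_j[OF I] pc by simp
  show ?thesis
  proof (cases "sys_reslist t i 1")
    case None
    then show ?thesis using I pc x st by (simp add: step_j_def)
  next
    case (Some r)
    have tri: "task_result i t = Some r" using task_inv_result[OF inv_task_i[OF I]] Some by simp
    show ?thesis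
    proof (cases r)
      case (ACK x')
      let ?t = "t\<lparr> sys_pc := (sys_pc t)(j := P5) \<rparr>"
      have e: "t' = ?t" using pc x Some ACK st by (simp add: step_j_def)
      have tr: "task_result k ?t = task_result k t" for k by (rule task_result_cong) simp_all
      have "task_inv i opi ?t = task_inv i opi t" "task_inv j opj ?t = task_inv j opj t"
        by (rule task_inv_cong; simp)+
      moreover have "proc_inv j opj v2 ?t" using inv_proc_j[OF I] pc by (simp add: proc_inv_def)
      moreover have "proc_inv i opi v1 ?t" using inv_proc_i[OF I] ij by (simp add: proc_inv_def)
      moreover have "sys_dec t j = None" using proc_inv_dec[OF inv_proc_j[OF I]] pc by simp
      ultimately show ?thesis
        using I ij tr pc x rj Some ACK unfolding e consensus_inv_def by clarsimp
    next
      case NACK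
      let ?t = "t\<lparr> sys_dec := (sys_dec t)(j := Some (Some v2)), sys_pc := (sys_pc t)(j := PDone) \<rparr>"
      have e: "t' = ?t" using pc x Some NACK st by (simp add: step_j_def)
      have tr: "task_result k ?t = task_result k t" for k by (rule task_result_cong) simp_all
      have "task_inv i opi ?t = task_inv i opi t" "task_inv j opj ?t = task_inv j opj t"
        by (rule task_inv_cong; simp)+
      moreover have "proc_inv j opj v2 ?t" using inv_proc_j[OF I] pc by (simp add: proc_inv_def)
      moreover have "proc_inv i opi v1 ?t" using inv_proc_i[OF I] ij by (simp add: proc_inv_def)
      ultimately show ?thesis using I ij tr pc rj tri NACK unfolding e consensus_inv_def by clarsimp
    qed
  qed
qed

lemma inv_step_j_decide:
  assumes I: "consensus_inv t" and st: "step_j i j opi opj v2 t t'" and pc: "sys_pc t j = P5"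
  shows "consensus_inv t'"
proof -
  have rj: "sys_reslist t j 1 \<noteq> None" using inv_reslist_j[OF I] pc by simp
  obtain x where x: "sys_reslist t i 1 = Some (ACK x)" using inv_P5_ack[OF I] pc by auto
  have tri: "task_result i t = Some (ACK x)" using task_inv_result[OF inv_task_i[OF I]] x by simp
  have "sys_oplist t i 1 = Some opi" using task_inv_oplist[OF inv_task_i[OF I]] tri by simp
  then have ci: "sys_creg t i = Some v1"
    using proc_inv_oplist_1[OF inv_proc_i[OF I]] proc_inv_creg[OF inv_proc_i[OF I]] by auto
  let ?t = "t\<lparr> sys_dec := (sys_dec t)(j := Some (Some v1)), sys_pc := (sys_pc t)(j := PDone) \<rparr>"
  have e: "t' = ?t" using pc ci st by (simp add: step_j_def)
  have tr: "task_result k ?t = task_result k t" for k by (rule task_result_cong) simp_all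
  have "task_inv i opi ?t = task_inv i opi t" "task_inv j opj ?t = task_inv j opj t"
    by (rule task_inv_cong; simp)+
  moreover have "proc_inv j opj v2 ?t" using inv_proc_j[OF I] pc by (simp add: proc_inv_def)
  moreover have "proc_inv i opi v1 ?t" using inv_proc_i[OF I] ij by (simp add: proc_inv_def)
  ultimately show ?thesis using I ij tr pc rj tri unfolding e consensus_inv_def by clarsimp
qed

lemma inv_step_j:
  assumes I: "consensus_inv t" and st: "step_j i j opi opj v2 t t'"
  shows "consensus_inv t'"
  using inv_step_j_logged_apply[OF I st] inv_step_j_lookup[OF I st] inv_step_j_await[OF I st]
    inv_step_j_decide[OF I st] step_j_PDone[OF st] I
  by (cases "sys_pc t j") auto

lemma inv_sys_step:
  assumes "consensus_inv t" "sys_step valid execute i j opi opj v1 v2 x t t'"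
  shows "consensus_inv t'"
  using assms(2) by (cases rule: sys_step_cases) (use assms(1) ij inv_next_i inv_step_j inv_next_task in auto)

lemma sys_step_dec_stable:
  assumes st: "sys_step valid execute i j opi opj v1 v2 x t t'" and I: "consensus_inv t"
    and k: "k \<in> {i, j}" and dec: "sys_dec t k \<noteq> None"
  shows "sys_dec t' k = sys_dec t k"
proof -
  have "sys_pc t k = PDone"
    using k dec proc_inv_dec[OF inv_proc_i[OF I]] proc_inv_dec[OF inv_proc_j[OF I]] by auto
  with st show ?thesis
    using k ij by (cases rule: sys_step_cases; cases "k = i";
      auto simp: next_i_frame next_i_PDone next_task_frame dest: step_j_frame step_j_PDone)
qed

end

section \<open>Runs\<close>

locale validated_consensus_run = validated_consensus valid execute S i j opi opj v1 v2
  for valid :: "'op list \<Rightarrow> 'op \<Rightarrow> 'p \<Rightarrow> bool"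
    and execute :: "'op list \<Rightarrow> 'op \<Rightarrow> 'p \<Rightarrow> 'r"
    and S :: "'op list" and i j :: 'p and opi opj :: 'op and v1 v2 :: 'v +
  fixes s :: "nat \<Rightarrow> ('p, 'op, 'v, 'r) sys" and a :: "nat \<Rightarrow> 'p actor"
  assumes run: "is_run valid execute S i j opi opj v1 v2 s a" and fair: "fair i j a"
begin

lemma run_step: "sys_step valid execute i j opi opj v1 v2 (a n) (s n) (s (Suc n))"
  using run by (simp add: is_run_def)

lemma run_inv: "consensus_inv (s n)"
proof (induction n)
  case 0
  then show ?case using run inv_init by (simp add: is_run_def)
next
  case (Suc n)
  then show ?case using inv_sys_step run_step by blast
qed

lemma run_step_task: "a n = Task k \<Longrightarrow> k \<in> {i, j} \<Longrightarrow> s (Suc n) = next_task valid execute k (s n)"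
  using run_step[of n] by (cases rule: sys_step_cases) auto

lemma run_step_i: "a n = Proc i \<Longrightarrow> s (Suc n) = next_i i j opi v1 (s n)"
  using run_step[of n] ij by (cases rule: sys_step_cases) auto

lemma run_step_j: "a n = Proc j \<Longrightarrow> step_j i j opi opj v2 (s n) (s (Suc n))"
  using run_step[of n] ij by (cases rule: sys_step_cases) auto

lemma run_reslist_Suc: "sys_reslist (s n) k c \<noteq> None \<Longrightarrow> sys_reslist (s (Suc n)) k c \<noteq> None"
  using sys_step_reslist_mono[OF ij run_step] .

lemma run_reslist_mono: "n \<le> m \<Longrightarrow> sys_reslist (s n) k c \<noteq> None \<Longrightarrow> sys_reslist (s m) k c \<noteq> None"
  by (induction m rule: dec_induct) (simp_all add: run_reslist_Suc)

lemma run_dec_stable: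
  "n \<le> m \<Longrightarrow> k \<in> {i, j} \<Longrightarrow> sys_dec (s n) k \<noteq> None \<Longrightarrow> sys_dec (s m) k = sys_dec (s n) k"
  by (induction m rule: dec_induct) (simp, metis sys_step_dec_stable run_step run_inv)

lemma task_responds:
  assumes k: "k \<in> {i, j}" and logged: "sys_oplist (s n) k 1 \<noteq> None"
  shows "\<exists>m\<ge>n. sys_reslist (s m) k 1 \<noteq> None"
proof -
  let ?f = "\<lambda>m. case sys_tpc (s m) k of TWait \<Rightarrow> 3 | TApply _ \<Rightarrow> 2 | TWrite _ \<Rightarrow> (1::nat)"
  have "sys_oplist (s (Suc m)) k 1 \<noteq> None \<and> ?f (Suc m) \<le> ?f m \<and> (a m = Task k \<longrightarrow> ?f (Suc m) < ?f m)"
    if logged: "sys_oplist (s m) k 1 \<noteq> None" and none: "sys_reslist (s (Suc m)) k 1 = None" for m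
  proof -
    have unanswered: "sys_reslist (s m) k 1 = None"
      using none sys_step_reslist_mono[OF ij run_step] by blast
    have "sys_dctr (s m) k = 1"
      using k task_inv_unanswered[OF inv_task_i[OF run_inv]] task_inv_unanswered[OF inv_task_j[OF run_inv]]
        unanswered by auto
    then show ?thesis
      using logged none unanswered sys_step_oplist_mono[OF ij run_step] sys_step_task_frame[OF run_step, of m k]
        run_step_task[OF _ k, of m]
      by (cases "a m = Task k") (auto simp: next_task_def split: tpc.splits option.splits)
  qed
  moreover have "correct a (Task k)"
    using fair k by (auto simp: fair_def)
  ultimately show ?thesis
    using logged
    by (intro correct_progress[where f = ?f and a = a and x = "Task k" and N = n
          and P = "\<lambda>m. sys_oplist (s m) k 1 \<noteq> None" and Q = "\<lambda>m. sys_reslist (s m) k 1 \<noteq> None"])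
      simp_all
qed

lemma proc_reaches:
  assumes correct: "correct a (Proc k)" and start: "R N"
    and stable: "\<And>n. R n \<Longrightarrow> R (Suc n)"
    and advance: "\<And>n. R n \<Longrightarrow> sys_pc (s n) k \<notin> G \<Longrightarrow> a n = Proc k \<Longrightarrow>
      pc_rank (sys_pc (s n) k) < pc_rank (sys_pc (s (Suc n)) k)"
  shows "\<exists>m\<ge>N. sys_pc (s m) k \<in> G"
proof (cases "sys_pc (s N) k \<in> G")
  case False
  let ?f = "\<lambda>n. 6 - pc_rank (sys_pc (s n) k)"
  have "(R (Suc n) \<and> sys_pc (s (Suc n)) k \<notin> G) \<and> ?f (Suc n) \<le> ?f n \<and> (a n = Proc k \<longrightarrow> ?f (Suc n) < ?f n)"
    if "R n \<and> sys_pc (s n) k \<notin> G" "sys_pc (s (Suc n)) k \<notin> G" for n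
    using that stable advance[of n] sys_step_pc_rank_mono[OF ij run_step, of n k]
      pc_rank_le[of "sys_pc (s (Suc n)) k"]
    by auto
  then show ?thesis
    using correct start False
    by (intro correct_progress[where f = ?f and a = a and x = "Proc k" and N = N
          and P = "\<lambda>n. R n \<and> sys_pc (s n) k \<notin> G" and Q = "\<lambda>n. sys_pc (s n) k \<in> G"])
      simp_all
qed blast

lemma proc_i_advances:
  assumes "a n = Proc i" and "sys_pc (s n) i \<noteq> PDone"
    and "sys_pc (s n) i = P2 \<Longrightarrow> sys_reslist (s n) i 1 \<noteq> None"
  shows "pc_rank (sys_pc (s n) i) < pc_rank (sys_pc (s (Suc n)) i)"
  using assms inv_pc_i[OF run_inv, of n] proc_inv_ctr[OF inv_proc_i[OF run_inv, of n]]
  by (auto simp: run_step_i intro!: next_i_pc_rank_less)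

lemma proc_j_advances:
  assumes "a n = Proc j" and "sys_pc (s n) j \<noteq> PDone"
    and "sys_pc (s n) j = P2 \<Longrightarrow> sys_reslist (s n) j 1 \<noteq> None"
    and "sys_pc (s n) j = P4 \<Longrightarrow> sys_reslist (s n) i 1 \<noteq> None"
  shows "pc_rank (sys_pc (s n) j) < pc_rank (sys_pc (s (Suc n)) j)"
  using assms inv_jidx[OF run_inv, of n] proc_inv_ctr[OF inv_proc_j[OF run_inv, of n]]
  by (intro step_j_pc_rank_less[OF run_step_j]) (cases "sys_pc (s n) j"; auto)+

lemma logged_apply_answered:
  assumes k: "k \<in> {i, j}" and correct: "correct a (Proc k)"
  shows "\<exists>m. sys_reslist (s m) k 1 \<noteq> None"
proof -
  have "\<exists>m\<ge>0. sys_pc (s m) k \<in> - {P0, P1}"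
  proof (rule proc_reaches[OF correct, where R = "\<lambda>_. True"])
    fix n assume "sys_pc (s n) k \<notin> - {P0, P1}" and "a n = Proc k"
    then show "pc_rank (sys_pc (s n) k) < pc_rank (sys_pc (s (Suc n)) k)"
      using k proc_i_advances[of n] proc_j_advances[of n] by auto
  qed simp_all
  then obtain m where "sys_pc (s m) k \<notin> {P0, P1}"
    by blast
  then have "sys_oplist (s m) k 1 \<noteq> None"
    using k proc_inv_oplist_1[OF inv_proc_i[OF run_inv]] proc_inv_oplist_1[OF inv_proc_j[OF run_inv]] by auto
  then show ?thesis
    using task_responds k by blast
qed

lemma decides_i:
  assumes correct: "correct a (Proc i)"
  shows "\<exists>n. sys_dec (s n) i \<noteq> None"
proof -
  obtain m where "sys_reslist (s m) i 1 \<noteq> None"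
    using logged_apply_answered correct by blast
  then have "\<exists>n\<ge>m. sys_pc (s n) i \<in> {PDone}"
    by (rule proc_reaches[OF correct]) (simp_all add: run_reslist_Suc proc_i_advances)
  then show ?thesis
    using proc_inv_dec[OF inv_proc_i[OF run_inv]] by auto
qed

lemma decides_j:
  assumes correct: "correct a (Proc j)"
  shows "\<exists>n. sys_dec (s n) j \<noteq> None"
proof -
  obtain m where answered_j: "sys_reslist (s m) j 1 \<noteq> None"
    using logged_apply_answered correct by blast
  then have "\<exists>n\<ge>m. sys_pc (s n) j \<in> {P4, P5, PDone}"
    by (rule proc_reaches[OF correct]) (auto simp: run_reslist_Suc intro: proc_j_advances)
  then obtain n where n: "n \<ge> m" "sys_pc (s n) j \<in> {P4, P5, PDone}"
    by blast
  have "\<exists>n'\<ge>n. sys_pc (s n') j \<in> {PDone}"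
  proof (cases "sys_pc (s n) j = PDone")
    case False
    \<comment> \<open>j waits only for the response to op_i, which is logged and hence answered by the
      object even if i has crashed\<close>
    then have "sys_oplist (s n) i 1 \<noteq> None"
      using inv_jidx[OF run_inv] n(2) by auto
    then obtain n' where n': "n' \<ge> n" "sys_reslist (s n') i 1 \<noteq> None"
      using task_responds by blast
    have "sys_reslist (s n') j 1 \<noteq> None"
      using run_reslist_mono answered_j n(1) n'(1) by (meson order_trans)
    with n'(2) have "\<exists>n''\<ge>n'. sys_pc (s n'') j \<in> {PDone}"
      by (intro proc_reaches[OF correct,
            where R = "\<lambda>n. sys_reslist (s n) i 1 \<noteq> None \<and> sys_reslist (s n) j 1 \<noteq> None"])
        (simp_all add: run_reslist_Suc proc_j_advances)
    then show ?thesis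
      using n'(1) order_trans by blast
  qed blast
  then show ?thesis
    using proc_inv_dec[OF inv_proc_j[OF run_inv]] by auto
qed

lemma decisions_agree:
  assumes "sys_dec (s n) i = Some x" and "sys_dec (s m) j = Some y"
  shows "x = y"
proof -
  have "sys_dec (s (max n m)) i = Some x" and "sys_dec (s (max n m)) j = Some y"
    using run_dec_stable[of n "max n m" i] run_dec_stable[of m "max n m" j] assms by simp_all
  then show ?thesis
    using inv_dec_i[OF run_inv] inv_dec_j[OF run_inv] by fastforce
qed

lemma decision_proposed:
  assumes "k \<in> {i, j}" and "sys_dec (s n) k = Some x"
  shows "x = Some v1 \<or> x = Some v2"
  using assms inv_dec_i[OF run_inv] inv_dec_j[OF run_inv] by blast

end

theorem mainTheorem8:
  fixes valid :: "'op list \<Rightarrow> 'op \<Rightarrow> 'p \<Rightarrow> bool"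
    and execute :: "'op list \<Rightarrow> 'op \<Rightarrow> 'p \<Rightarrow> 'r"
    and S :: "'op list" and i j :: 'p and opi opj :: 'op and v1 v2 :: 'v
    and s :: "nat \<Rightarrow> ('p, 'op, 'v, 'r) sys" and a :: "nat \<Rightarrow> 'p actor"
  assumes "i \<noteq> j"
    and "opi \<notin> set S" and "opj \<notin> set S"
    and "valid S opi i" and "valid S opj j"
    and "\<not> valid (S @ [opj]) opi i"
    and "valid (S @ [opi]) opj j"
    and "is_run valid execute S i j opi opj v1 v2 s a"
    and "fair i j a"
  shows "(\<forall>k\<in>{i, j}. correct a (Proc k) \<longrightarrow> (\<exists>n. sys_dec (s n) k \<noteq> None))
       \<and> (\<forall>n m x y. sys_dec (s n) i = Some x \<longrightarrow> sys_dec (s m) j = Some y \<longrightarrow> x = y)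
       \<and> (\<forall>n k x. k \<in> {i, j} \<longrightarrow> sys_dec (s n) k = Some x \<longrightarrow> x = Some v1 \<or> x = Some v2)"
proof -
  interpret validated_consensus_run valid execute S i j opi opj v1 v2 s a
    by unfold_locales (use assms in auto)
  show ?thesis
    using decides_i decides_j decisions_agree decision_proposed by blast
qed

end
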